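(* Let $X_1, X_2, \ldots$ be independent and identically distributed random variables with the standard normal law $N(0,1)$ (so the true location parameter is $\mu = 0$ and the known scale is $\sigma = 1$). For $m \geq 0$ let $K_m = \sum_{k=1}^m X_k$. Fix a shape parameter $\gamma \geq 0$ (arbitrary), let $\psi = 1_{[0,\infty[}$, and for each positive integer $n$ let $N_n$ be the $\{n, 2n\}$-valued random sample size depending only on $X_1,\ldots,X_n$ through $$\mathbb{P}[N_n = n \mid X_1,\ldots,X_n] = \psi(K_n/n^\gamma),$$ i.e. $N_n = n$ if $K_n \geq 0$ and $N_n = 2n$ if $K_n < 0$. Define the marginal MLE $\widehat{\mu}_{N_n} = \frac{1}{N_n}\sum_{k=1}^{N_n} X_k$, and the conditional MLE $\widehat{\mu}_{c,N_n}$ as the value of $\theta \in \mathbb{R}$ which, on the event $N_n = m$ ($m \in \{n,2n\}$), maximizes the conditional likelihood $$\mathcal{L}(\theta; X_1,\ldots,X_m \mid N_n = m) = \prod_{k=1}^m \phi(X_k - \theta)\,\frac{\mathbb{P}_\theta[N_n = m \mid X_1,\ldots,X_m]}{\mathbb{P}_\theta[N_n = m]},$$ where $\phi$ is the standard normal density and $\mathbb{P}_\theta$ denotes probability when the $X_k$ are i.i.d. $N(\theta,1)$ (so $\mathbb{P}_\theta[N_n = n] = \Phi(\sqrt{n}\,\theta)$ and $\mathbb{P}_\theta[N_n = 2n] = 1-\Phi(\sqrt{n}\,\theta)$, with $\Phi$ the standard normal distribution function; this maximizer exists and is unique). Then $$\lim_{n\to\infty} \mathbb{E}\big[|\widehat{\mu}_{N_n}|\big]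 = 0 \quad\text{and}\quad \mathbb{E}\big[|\widehat{\mu}_{c,N_n}|\big] = \infty \text{ for every positive integer } n.$$
   Context: This models a two-stage group sequential trial: after observing $X_1,\ldots,X_n$ the trial stops (final sample size $n$) if $K_n \ge 0$, and otherwise the further observations $X_{n+1},\ldots,X_{2n}$ are collected (final sample size $2n$). Expectations $\mathbb{E}$ are under the true parameter $\mu = 0$, $\sigma = 1$. *)

theory Defs
  imports "HOL-Probability.Probability"
begin

text \<open>Data are represented as a sequence x :: nat => real; x k is X_k (k >= 1).\<close>

definition psi :: "real \<Rightarrow> real" where
  "psi t = indicator {0..} t"

definition Ksum :: "(nat \<Rightarrow> real) \<Rightarrow> nat \<Rightarrow> real" where
  "Ksum x m = (\<Sum>k\<in>{1..m}. x k)"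

definition Nsize :: "real \<Rightarrow> nat \<Rightarrow> (nat \<Rightarrow> real) \<Rightarrow> nat" where
  "Nsize \<gamma> n x = (if psi (Ksum x n / real n powr \<gamma>) = 1 then n else 2 * n)"

definition Phi :: "real \<Rightarrow> real" where
  "Phi t = cdf (density lborel std_normal_density) t"

text \<open>P_theta[N_n = m | X_1..X_m] (depends only on X_1..X_n).\<close>
definition cond_prob_N :: "real \<Rightarrow> nat \<Rightarrow> nat \<Rightarrow> (nat \<Rightarrow> real) \<Rightarrow> real" where
  "cond_prob_N \<gamma> n m x =
     (if m = n then psi (Ksum x n / real n powr \<gamma>) else 1 - psi (Ksum x n / real n powr \<gamma>))"

definition prob_N :: "nat \<Rightarrow> nat \<Rightarrow> real \<Rightarrow> real" where
  "prob_N n m \<theta> = (if m = n then Phi (sqrt (real n) * \<theta>) else 1 - Phi (sqrt (real n) * \<theta>))"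

definition cond_lik :: "real \<Rightarrow> nat \<Rightarrow> nat \<Rightarrow> (nat \<Rightarrow> real) \<Rightarrow> real \<Rightarrow> real" where
  "cond_lik \<gamma> n m x \<theta> =
     (\<Prod>k\<in>{1..m}. std_normal_density (x k - \<theta>)) * cond_prob_N \<gamma> n m x / prob_N n m \<theta>"

definition mle :: "real \<Rightarrow> nat \<Rightarrow> (nat \<Rightarrow> real) \<Rightarrow> real" where
  "mle \<gamma> n x = Ksum x (Nsize \<gamma> n x) / real (Nsize \<gamma> n x)"

definition mle_c :: "real \<Rightarrow> nat \<Rightarrow> (nat \<Rightarrow> real) \<Rightarrow> real" where
  "mle_c \<gamma> n x = (THE \<theta>. \<forall>\<theta>'. cond_lik \<gamma> n (Nsize \<gamma> n x) x \<theta>' \<le> cond_lik \<gamma> n (Nsize \<gamma> n x) x \<theta>)"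

end

theory Submission
  imports Defs "HOL-Real_Asymp.Real_Asymp"
begin

(* Both estimators are functions of the partial sums K_m. The marginal MLE is bounded by
   |K_n|/n + |K_2n|/(2n), whose expectation is O(n^(-1/2)).

   On {N_n = n}, with s = K_n / sqrt n and t = sqrt n * theta, the conditional likelihood is,
   up to a factor free of theta, the reciprocal of
     cond_lik_recip s t = Phi t * exp (t^2/2 - s t)
                        = (2 pi)^(-1/2) * integral over v >= 0 of exp (t (v - s) - v^2/2),
   which is strictly convex in t; so the conditional MLE is its unique minimiser divided by sqrt n.
   For t = -a < 0 the integral lies between exp (s a) (1/a - 1/a^3) and exp (s a) / a (the
   Mills-ratio bounds), and comparing t = -8/s, -1/s, -1/(4s) traps the minimiser below -1/(4s)
   when 0 < s <= 1/16. Hence |mle_c| >= 1/(4 K_n) on {0 < K_n <= sqrt n / 16}; as K_n ~ N(0,n)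
   has a density bounded below near 0, E |mle_c| dominates a multiple of the divergent
   integral of 1/y near 0. *)

section \<open>Strict convexity on the real line\<close>

definition strictly_convex :: "(real \<Rightarrow> real) \<Rightarrow> bool" where
  "strictly_convex f \<longleftrightarrow>
     (\<forall>x y u. x \<noteq> y \<longrightarrow> 0 < u \<longrightarrow> u < 1 \<longrightarrow> f ((1 - u) * x + u * y) < (1 - u) * f x + u * f y)"

lemma strictly_convexD:
  "strictly_convex f \<Longrightarrow> x \<noteq> y \<Longrightarrow> 0 < u \<Longrightarrow> u < 1 \<Longrightarrow>
     f ((1 - u) * x + u * y) < (1 - u) * f x + u * f y"
  unfolding strictly_convex_def by blast

lemma strictly_convex_imp_convex_on: "strictly_convex f \<Longrightarrow> convex_on UNIV f"
  by (intro convex_on_linorderI) (auto intro!: less_imp_le strictly_convexD)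

lemma strictly_convex_exp: "strictly_convex exp"
  unfolding strictly_convex_def
proof (intro allI impI)
  fix x y u :: real
  assume "x \<noteq> y" "0 < u" "u < 1"
  define m where "m = (1 - u) * x + u * y"
  have "m \<noteq> x" "m \<noteq> y"
  proof -
    have "m - x = u * (y - x)" "m - y = (1 - u) * (x - y)"
      unfolding m_def by (simp_all add: algebra_simps)
    then show "m \<noteq> x" "m \<noteq> y" using \<open>x \<noteq> y\<close> \<open>0 < u\<close> \<open>u < 1\<close> by auto
  qed
  \<comment> \<open>exp lies strictly above its tangent line at \<open>m\<close> away from \<open>m\<close>\<close>
  then have "exp m * (1 + (z - m)) < exp z" if "z \<in> {x, y}" for z
    using that exp_minus_greater[of "m - z"] by (auto simp: exp_diff field_simps)
  then have "(1 - u) * (exp m * (1 + (x - m))) + u * (exp m * (1 + (y - m))) < (1 - u) * exp x + u * exp y"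
    using \<open>0 < u\<close> \<open>u < 1\<close> by (intro add_strict_mono mult_strict_left_mono) auto
  moreover have "(1 - u) * (1 + (x - m)) + u * (1 + (y - m)) = 1"
    unfolding m_def by (simp add: algebra_simps)
  ultimately show "exp ((1 - u) * x + u * y) < (1 - u) * exp x + u * exp y"
    by (simp add: m_def algebra_simps)
qed

lemma convex_on_attains_min_between:
  fixes f :: "real \<Rightarrow> real"
  assumes cvx: "convex_on UNIV f" and "a < c" "c < b" "f c < f a" "f c < f b"
  obtains t where "a < t" "t < b" "\<And>y. f t \<le> f y"
proof -
  have "continuous_on {a..b} f"
    using convex_on_continuous[OF open_UNIV cvx] continuous_on_subset by blast
  then obtain t where t: "t \<in> {a..b}" and min_ab: "\<And>y. y \<in> {a..b} \<Longrightarrow> f t \<le> f y"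
    using continuous_attains_inf[of "{a..b}" f] \<open>a < c\<close> \<open>c < b\<close> by auto
  have "f t < f a" "f t < f b"
    using min_ab[of c] assms(2-5) by auto
  have le_max: "f z \<le> max (f p) (f q)" if "z \<in> {p..q}" for p q z
    using convex_on_le_max[OF convex_on_subset[OF cvx] that] by simp
  have "f t \<le> f y" for y
  proof -
    consider "y < a" | "y \<in> {a..b}" | "b < y" by force
    then show ?thesis
    proof cases
      case 1
      then show ?thesis using le_max[of a y t] t \<open>f t < f a\<close> by auto
    next
      case 2
      then show ?thesis by (rule min_ab)
    next
      case 3
      then show ?thesis using le_max[of b t y] t \<open>f t < f b\<close> by auto
    qed
  qed
  moreover have "a < t" "t < b"
    using t \<open>f t < f a\<close> \<open>f t < f b\<close> by (auto simp: order.order_iff_strict)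
  ultimately show ?thesis using that by blast
qed

lemma strictly_convex_min_unique:
  assumes "strictly_convex f" and "\<And>y. f s \<le> f y" "\<And>y. f t \<le> f y"
  shows "s = t"
proof (rule ccontr)
  assume "s \<noteq> t"
  define m where "m = (1 - 1/2) * s + 1/2 * t"
  have "f m < (1 - 1/2) * f s + 1/2 * f t"
    unfolding m_def using assms(1) \<open>s \<noteq> t\<close> by (intro strictly_convexD) auto
  then show False using assms(2,3)[of m] by simp
qed

section \<open>The reciprocal conditional likelihood\<close>

lemma not_AE_lborel_notin_Icc:
  fixes a b :: real
  assumes "a < b"
  shows "\<not> (AE x in lborel. x \<notin> {a..b})"
proof
  assume "AE x in lborel. x \<notin> {a..b}"
  then obtain N where N: "{x \<in> space lborel. \<not> x \<notin> {a..b}} \<subseteq> N" "emeasure lborel N = 0" "N \<in> sets lborel"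
    by (rule AE_E)
  then have "emeasure lborel {a..b} \<le> emeasure lborel N"
    by (intro emeasure_mono) auto
  with N(2) assms show False by simp
qed

lemma nn_integral_Ici_strict_mono:
  fixes f g :: "real \<Rightarrow> real"
  assumes [measurable]: "f \<in> borel_measurable borel" "g \<in> borel_measurable borel"
    and fin: "(\<integral>\<^sup>+v\<in>{0..}. ennreal (f v) \<partial>lborel) \<noteq> \<infinity>"
    and nonneg: "\<And>v. 0 \<le> f v"
    and le: "\<And>v. 0 \<le> v \<Longrightarrow> f v \<le> g v"
    and less: "\<And>v. 0 \<le> v \<Longrightarrow> v \<noteq> s \<Longrightarrow> f v < g v"
  shows "(\<integral>\<^sup>+v\<in>{0..}. ennreal (f v) \<partial>lborel) < (\<integral>\<^sup>+v\<in>{0..}. ennreal (g v) \<partial>lborel)"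
proof (rule nn_integral_less[OF _ _ fin])
  show "AE v in lborel. ennreal (f v) * indicator {0..} v \<le> ennreal (g v) * indicator {0..} v"
    using le by (intro AE_I2) (simp add: ennreal_leI split: split_indicator)
  show "\<not> (AE v in lborel. ennreal (g v) * indicator {0..} v \<le> ennreal (f v) * indicator {0..} v)"
  proof
    assume "AE v in lborel. ennreal (g v) * indicator {0..} v \<le> ennreal (f v) * indicator {0..} v"
    then have "AE v in lborel. v \<notin> {\<bar>s\<bar> + 1 .. \<bar>s\<bar> + 2}"
    proof (elim AE_mp, intro AE_I2 impI notI)
      fix v
      assume g_le: "ennreal (g v) * indicator {0..} v \<le> ennreal (f v) * indicator {0..} v"
        and v: "v \<in> {\<bar>s\<bar> + 1 .. \<bar>s\<bar> + 2}"
      have "0 \<le> v" "v \<noteq> s"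
        using v abs_ge_zero[of s] abs_ge_self[of s] by (auto simp del: abs_ge_zero abs_ge_self)
      with g_le nonneg[of v] have "g v \<le> f v"
        by (simp add: ennreal_le_iff)
      with less[OF \<open>0 \<le> v\<close> \<open>v \<noteq> s\<close>] show False by simp
    qed
    then show False using not_AE_lborel_notin_Icc by simp
  qed
qed measurable

lemma Phi_eq_nn_integral:
  "ennreal (Phi t) = (\<integral>\<^sup>+v\<in>{0..}. ennreal (std_normal_density (t - v)) \<partial>lborel)"
proof -
  interpret prob_space "density lborel std_normal_density"
    by (rule prob_space_normal_density) simp
  have "ennreal (Phi t) = emeasure (density lborel std_normal_density) {..t}"
    unfolding Phi_def cdf_def by (simp add: emeasure_eq_measure)
  also have "\<dots> = (\<integral>\<^sup>+u\<in>{..t}. ennreal (std_normal_density u) \<partial>lborel)"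
    by (rule emeasure_density) auto
  also have "\<dots> = ennreal \<bar>-1\<bar> * (\<integral>\<^sup>+v. ennreal (std_normal_density (t + (-1) * v)) *
                                      indicator {..t} (t + (-1) * v) \<partial>lborel)"
    by (rule nn_integral_real_affine) auto
  also have "\<dots> = (\<integral>\<^sup>+v\<in>{0..}. ennreal (std_normal_density (t - v)) \<partial>lborel)"
    by (auto intro!: nn_integral_cong simp: indicator_def)
  finally show ?thesis .
qed

lemma Phi_pos: "0 < Phi t"
proof -
  have "(\<integral>\<^sup>+v\<in>{0..}. ennreal (std_normal_density (t - v)) \<partial>lborel) \<noteq> 0"
  proof
    assume "(\<integral>\<^sup>+v\<in>{0..}. ennreal (std_normal_density (t - v)) \<partial>lborel) = 0"
    then have "AE v in lborel. ennreal (std_normal_density (t - v)) * indicator {0..} v = 0"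
      by (subst (asm) nn_integral_0_iff_AE) auto
    then have "AE v in lborel. v \<notin> {0..1::real}"
      using normal_density_pos[of 1 0] by (elim AE_mp) (auto intro!: AE_I2 simp: indicator_def less_le)
    then show False using not_AE_lborel_notin_Icc[of 0 1] by simp
  qed
  moreover have "0 \<le> Phi t"
    unfolding Phi_def cdf_def by simp
  ultimately show ?thesis
    unfolding Phi_eq_nn_integral[symmetric] by simp
qed

definition cond_lik_recip :: "real \<Rightarrow> real \<Rightarrow> real" where
  "cond_lik_recip s t = Phi t * exp (t\<^sup>2 / 2 - s * t)"

lemma cond_lik_recip_pos: "0 < cond_lik_recip s t"
  unfolding cond_lik_recip_def using Phi_pos by simp

lemma cond_lik_recip_nn_integral:
  "ennreal (sqrt (2 * pi) * cond_lik_recip s t) =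
     (\<integral>\<^sup>+v\<in>{0..}. ennreal (exp (t * (v - s) - v\<^sup>2 / 2)) \<partial>lborel)"
proof -
  define c where "c = sqrt (2 * pi) * exp (t\<^sup>2 / 2 - s * t)"
  have "c \<ge> 0" unfolding c_def by simp
  have pointwise: "c * std_normal_density (t - v) = exp (t * (v - s) - v\<^sup>2 / 2)" for v
    unfolding c_def std_normal_density_def
    by (simp add: exp_add[symmetric]) (simp add: power2_eq_square field_simps)
  have "ennreal (sqrt (2 * pi) * cond_lik_recip s t) = ennreal c * ennreal (Phi t)"
    unfolding cond_lik_recip_def c_def using Phi_pos[of t]
    by (simp add: ennreal_mult'[symmetric] mult_ac)
  also have "\<dots> = (\<integral>\<^sup>+v\<in>{0..}. ennreal c * ennreal (std_normal_density (t - v)) \<partial>lborel)"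
    unfolding Phi_eq_nn_integral by (subst nn_integral_cmult[symmetric]) (simp_all add: mult.assoc)
  also have "\<dots> = (\<integral>\<^sup>+v\<in>{0..}. ennreal (exp (t * (v - s) - v\<^sup>2 / 2)) \<partial>lborel)"
    using \<open>c \<ge> 0\<close> by (intro nn_integral_cong) (simp add: pointwise[symmetric] ennreal_mult)
  finally show ?thesis .
qed

lemma strictly_convex_cond_lik_recip: "strictly_convex (cond_lik_recip s)"
  unfolding strictly_convex_def
proof (intro allI impI)
  fix x y u :: real
  assume "x \<noteq> y" "0 < u" "u < 1"
  define g where "g t v = exp (t * (v - s) - v\<^sup>2 / 2)" for t v :: real
  define m where "m = (1 - u) * x + u * y"
  define c where "c = sqrt (2 * pi)"
  have [measurable]: "g t \<in> borel_measurable borel" for t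
    unfolding g_def by measurable
  have g_m: "g m v = exp ((1 - u) * (x * (v - s) - v\<^sup>2 / 2) + u * (y * (v - s) - v\<^sup>2 / 2))" for v
    unfolding g_def m_def by (simp add: field_simps)
  have g_le: "g m v \<le> (1 - u) * g x v + u * g y v" for v
    unfolding g_m using convex_onD[OF exp_convex, of u] \<open>0 < u\<close> \<open>u < 1\<close> by (simp add: g_def)
  have g_less: "g m v < (1 - u) * g x v + u * g y v" if "v \<noteq> s" for v
    unfolding g_m using strictly_convexD[OF strictly_convex_exp _ \<open>0 < u\<close> \<open>u < 1\<close>] \<open>x \<noteq> y\<close> that
    by (simp add: g_def)
  have rep: "ennreal (c * cond_lik_recip s t) = (\<integral>\<^sup>+v\<in>{0..}. ennreal (g t v) \<partial>lborel)" for t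
    unfolding c_def g_def by (rule cond_lik_recip_nn_integral)
  have "ennreal (c * cond_lik_recip s m) < (\<integral>\<^sup>+v\<in>{0..}. ennreal ((1 - u) * g x v + u * g y v) \<partial>lborel)"
  proof -
    have "(\<integral>\<^sup>+v\<in>{0..}. ennreal (g m v) \<partial>lborel) \<noteq> \<infinity>"
      unfolding rep[symmetric] by simp
    then show ?thesis
      unfolding rep using g_le g_less by (intro nn_integral_Ici_strict_mono) (auto simp: g_def)
  qed
  also have "\<dots> = (\<integral>\<^sup>+v. ennreal (1 - u) * (ennreal (g x v) * indicator {0..} v)
                             + ennreal u * (ennreal (g y v) * indicator {0..} v) \<partial>lborel)"
    using \<open>0 < u\<close> \<open>u < 1\<close>
    by (intro nn_integral_cong) (simp add: g_def ennreal_mult split: split_indicator)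
  also have "\<dots> = ennreal (1 - u) * ennreal (c * cond_lik_recip s x)
                  + ennreal u * ennreal (c * cond_lik_recip s y)"
    unfolding rep by (simp add: nn_integral_add nn_integral_cmult)
  also have "\<dots> = ennreal (c * ((1 - u) * cond_lik_recip s x + u * cond_lik_recip s y))"
    using \<open>0 < u\<close> \<open>u < 1\<close> cond_lik_recip_pos[of s x] cond_lik_recip_pos[of s y]
    by (simp add: c_def ennreal_mult[symmetric] ennreal_plus[symmetric] algebra_simps del: ennreal_plus)
  finally have "c * cond_lik_recip s m < c * ((1 - u) * cond_lik_recip s x + u * cond_lik_recip s y)"
    using cond_lik_recip_pos[of s m] by (subst (asm) ennreal_less_iff) (auto simp: c_def)
  then show "cond_lik_recip s ((1 - u) * x + u * y) < (1 - u) * cond_lik_recip s x + u * cond_lik_recip s y"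
    unfolding m_def c_def by simp
qed

lemma nn_integral_power_times_exp_Ici_scaled:
  fixes a :: real
  assumes "0 < a"
  shows "(\<integral>\<^sup>+v\<in>{0..}. ennreal (v ^ k * exp (- (a * v))) \<partial>lborel) = ennreal (fact k / a ^ Suc k)"
proof -
  let ?I = "\<integral>\<^sup>+v\<in>{0..}. ennreal (v ^ k * exp (- (a * v))) \<partial>lborel"
  have "ennreal (fact k) = (\<integral>\<^sup>+x\<in>{0..}. ennreal (x ^ k * exp (- x)) \<partial>lborel)"
    using nn_intergal_power_times_exp_Ici[of k] by simp
  also have "\<dots> = ennreal \<bar>a\<bar> * (\<integral>\<^sup>+v. ennreal ((0 + a * v) ^ k * exp (- (0 + a * v)))
                                          * indicator {0..} (0 + a * v) \<partial>lborel)"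
    using assms by (intro nn_integral_real_affine) auto
  also have "\<dots> = ennreal a * (\<integral>\<^sup>+v. ennreal (a ^ k) * (ennreal (v ^ k * exp (- (a * v))) * indicator {0..} v) \<partial>lborel)"
    using assms unfolding abs_of_pos[OF assms]
    by (intro arg_cong[where f="\<lambda>I. ennreal a * I"] nn_integral_cong)
       (auto simp: power_mult_distrib ennreal_mult zero_le_mult_iff mult.assoc split: split_indicator)
  also have "\<dots> = ennreal (a ^ Suc k) * ?I"
    using assms by (simp add: nn_integral_cmult ennreal_mult mult.assoc)
  finally have I: "ennreal (fact k) = ennreal (a ^ Suc k) * ?I" .
  have "?I = ?I * ennreal (a ^ Suc k) / ennreal (a ^ Suc k)"
    using assms by (simp add: ennreal_mult_divide_eq)
  also have "\<dots> = ennreal (fact k / a ^ Suc k)"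
    unfolding I[symmetric] mult.commute[of ?I] using assms by (simp add: divide_ennreal)
  finally show ?thesis .
qed

lemma nn_integral_exp_Ici_scaled:
  fixes a :: real
  assumes "0 < a"
  shows "(\<integral>\<^sup>+v\<in>{0..}. ennreal (exp (- (a * v))) \<partial>lborel) = ennreal (1 / a)"
  using nn_integral_power_times_exp_Ici_scaled[OF assms, of 0] by simp

lemma cond_lik_recip_neg_nn_integral:
  "ennreal (sqrt (2 * pi) * cond_lik_recip s (- a)) =
     (\<integral>\<^sup>+v\<in>{0..}. ennreal (exp (s * a) * exp (- (a * v)) * exp (- (v\<^sup>2 / 2))) \<partial>lborel)"
  unfolding cond_lik_recip_nn_integral by (simp add: exp_add[symmetric] algebra_simps)

lemma cond_lik_recip_upper:
  assumes "0 < a"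
  shows "sqrt (2 * pi) * cond_lik_recip s (- a) \<le> exp (s * a) / a"
proof -
  have "ennreal (sqrt (2 * pi) * cond_lik_recip s (- a))
          \<le> (\<integral>\<^sup>+v\<in>{0..}. ennreal (exp (s * a)) * ennreal (exp (- (a * v))) \<partial>lborel)"
    unfolding cond_lik_recip_neg_nn_integral
    by (intro nn_integral_mono) (auto simp: ennreal_mult[symmetric] intro!: ennreal_leI split: split_indicator)
  also have "\<dots> = ennreal (exp (s * a)) * ennreal (1 / a)"
    unfolding mult.assoc nn_integral_exp_Ici_scaled[OF assms, symmetric] by (subst nn_integral_cmult) auto
  also have "\<dots> = ennreal (exp (s * a) / a)"
    using assms by (simp add: ennreal_mult[symmetric])
  finally show ?thesis
    using assms by (subst (asm) ennreal_le_iff) auto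
qed

lemma cond_lik_recip_lower:
  assumes "0 < a"
  shows "exp (s * a) * (1 / a - 1 / a ^ 3) \<le> sqrt (2 * pi) * cond_lik_recip s (- a)"
proof -
  define e where "e = exp (s * a)"
  have "e > 0" unfolding e_def by simp
  have pointwise: "e * exp (- (a * v)) \<le> e * exp (- (a * v)) * exp (- (v\<^sup>2 / 2)) + e / 2 * (v\<^sup>2 * exp (- (a * v)))"
    for v :: real
  proof -
    have "e * exp (- (a * v)) * (1 - v\<^sup>2 / 2) \<le> e * exp (- (a * v)) * exp (- (v\<^sup>2 / 2))"
      using \<open>e > 0\<close> exp_minus_ge[of "v\<^sup>2 / 2"] by (intro mult_left_mono) auto
    then show ?thesis
      by (simp add: algebra_simps)
  qed
  have "ennreal (e / a) = ennreal e * (\<integral>\<^sup>+v\<in>{0..}. ennreal (exp (- (a * v))) \<partial>lborel)"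
    unfolding nn_integral_exp_Ici_scaled[OF assms]
    using assms \<open>e > 0\<close> by (simp add: ennreal_mult[symmetric])
  also have "\<dots> = (\<integral>\<^sup>+v. ennreal (e * exp (- (a * v))) * indicator {0..} v \<partial>lborel)"
    using \<open>e > 0\<close> by (subst nn_integral_cmult[symmetric]) (auto simp: ennreal_mult mult.assoc)
  also have "\<dots> \<le> (\<integral>\<^sup>+v. ennreal (e * exp (- (a * v)) * exp (- (v\<^sup>2 / 2))) * indicator {0..} v
                      + ennreal (e / 2) * (ennreal (v ^ 2 * exp (- (a * v))) * indicator {0..} v) \<partial>lborel)"
    using pointwise \<open>e > 0\<close>
    by (intro nn_integral_mono)
       (auto simp: ennreal_mult[symmetric] ennreal_plus[symmetric] intro!: ennreal_leI
             split: split_indicator simp del: ennreal_plus)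
  also have "\<dots> = ennreal (sqrt (2 * pi) * cond_lik_recip s (- a)) + ennreal (e / 2) * ennreal (2 / a ^ 3)"
    using nn_integral_power_times_exp_Ici_scaled[OF assms, of 2]
    unfolding cond_lik_recip_neg_nn_integral e_def
    by (simp add: nn_integral_add nn_integral_cmult numeral_eq_Suc)
  also have "\<dots> = ennreal (sqrt (2 * pi) * cond_lik_recip s (- a) + e / a ^ 3)"
    using assms \<open>e > 0\<close> cond_lik_recip_pos[of s "- a"]
    by (simp add: ennreal_mult[symmetric] ennreal_plus[symmetric] del: ennreal_plus)
  finally have "e / a \<le> sqrt (2 * pi) * cond_lik_recip s (- a) + e / a ^ 3"
    using assms \<open>e > 0\<close> cond_lik_recip_pos[of s "- a"] by (subst (asm) ennreal_le_iff) auto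
  then show ?thesis
    unfolding e_def by (simp add: algebra_simps)
qed

lemma cond_lik_recip_three_points:
  assumes "0 < s" "s \<le> 1 / 16"
  shows "cond_lik_recip s (- (1 / s)) < cond_lik_recip s (- (8 / s))"
    and "cond_lik_recip s (- (1 / s)) < cond_lik_recip s (- ((1 / 4) / s))"
proof -
  define c where "c = sqrt (2 * pi)"
  have "c > 0" unfolding c_def by simp
  have upper: "c * cond_lik_recip s (- (k / s)) \<le> exp k * s / k" if "0 < k" for k
    using cond_lik_recip_upper[of "k / s" s] that assms by (simp add: c_def)
  have lower: "exp k * (s / k - s ^ 3 / k ^ 3) \<le> c * cond_lik_recip s (- (k / s))" if "0 < k" for k
    using cond_lik_recip_lower[of "k / s" s] that assms by (simp add: c_def power_divide)
  have "s ^ 3 = s * s\<^sup>2" by (simp add: power2_eq_square power3_eq_cube)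
  moreover have "s\<^sup>2 \<le> 1 / 256"
    using assms power_mono[of s "1 / 16" 2] by (simp add: power2_eq_square)
  ultimately have small: "s ^ 3 \<le> s / 256"
    using assms by (simp add: mult_left_mono)
  have "c * cond_lik_recip s (- (1 / s)) \<le> exp 1 * s"
    using upper[of 1] by simp
  also have "\<dots> \<le> 3 * s"
    using exp_le assms by simp
  finally have mid: "c * cond_lik_recip s (- (1 / s)) \<le> 3 * s" .
  have "(3::real) ^ 4 \<le> exp 2 ^ 4"
    using exp_ge_add_one_self[of "2::real"] by (intro power_mono) auto
  then have "81 \<le> exp (8::real)"
    by (simp add: exp_of_nat_mult[symmetric])
  then have "81 * (s / 10) \<le> exp 8 * (s / 8 - s ^ 3 / 8 ^ 3)"
    using assms small by (intro mult_mono) auto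
  also have "\<dots> \<le> c * cond_lik_recip s (- (8 / s))"
    by (rule lower) simp
  finally have "c * cond_lik_recip s (- (1 / s)) < c * cond_lik_recip s (- (8 / s))"
    using mid assms by linarith
  then show "cond_lik_recip s (- (1 / s)) < cond_lik_recip s (- (8 / s))"
    using \<open>c > 0\<close> by simp
  have "1 * (15 / 4 * s) \<le> exp (1 / 4) * (s / (1 / 4) - s ^ 3 / (1 / 4) ^ 3)"
    using assms small by (intro mult_mono) (auto simp: power_divide)
  also have "\<dots> \<le> c * cond_lik_recip s (- ((1 / 4) / s))"
    by (rule lower) simp
  finally have "c * cond_lik_recip s (- (1 / s)) < c * cond_lik_recip s (- ((1 / 4) / s))"
    using mid assms by linarith
  then show "cond_lik_recip s (- (1 / s)) < cond_lik_recip s (- ((1 / 4) / s))"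
    using \<open>c > 0\<close> by simp
qed

section \<open>The two estimators\<close>

lemma std_normal_density_shift:
  "std_normal_density (z - \<theta>) = std_normal_density z * exp (\<theta> * z - \<theta>\<^sup>2 / 2)"
  unfolding std_normal_density_def mult.assoc exp_add[symmetric] by (simp add: power2_diff field_simps)

lemma prod_std_normal_density_shift:
  "(\<Prod>k\<in>{1..n}. std_normal_density (x k - \<theta>))
     = (\<Prod>k\<in>{1..n}. std_normal_density (x k)) * exp (\<theta> * Ksum x n - real n * \<theta>\<^sup>2 / 2)"
proof -
  have "(\<Sum>k\<in>{1..n}. \<theta> * x k - \<theta>\<^sup>2 / 2) = \<theta> * Ksum x n - real n * \<theta>\<^sup>2 / 2"
    by (simp add: Ksum_def sum_subtractf sum_distrib_left)
  then show ?thesis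
    by (simp add: std_normal_density_shift prod.distrib exp_sum[symmetric])
qed

lemma Nsize_eq_self: "0 \<le> Ksum x n \<Longrightarrow> Nsize \<gamma> n x = n"
  unfolding Nsize_def psi_def by simp

lemma Nsize_eq_double: "n \<ge> 1 \<Longrightarrow> Ksum x n < 0 \<Longrightarrow> Nsize \<gamma> n x = 2 * n"
proof -
  assume "n \<ge> 1" "Ksum x n < 0"
  then have "Ksum x n / real n powr \<gamma> < 0"
    by (simp add: divide_neg_pos)
  then show ?thesis
    unfolding Nsize_def psi_def by simp
qed

lemma cond_lik_eq_cond_lik_recip:
  assumes "n \<ge> 1" "0 \<le> Ksum x n"
  shows "cond_lik \<gamma> n n x \<theta>
           = (\<Prod>k\<in>{1..n}. std_normal_density (x k)) / cond_lik_recip (Ksum x n / sqrt n) (sqrt n * \<theta>)"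
proof -
  have "(sqrt n * \<theta>)\<^sup>2 / 2 - Ksum x n / sqrt n * (sqrt n * \<theta>) = - (\<theta> * Ksum x n - real n * \<theta>\<^sup>2 / 2)"
    using assms(1) by (simp add: power_mult_distrib algebra_simps)
  then have e: "exp ((sqrt n * \<theta>)\<^sup>2 / 2 - Ksum x n / sqrt n * (sqrt n * \<theta>))
               = inverse (exp (\<theta> * Ksum x n - real n * \<theta>\<^sup>2 / 2))"
    by (simp only: exp_minus)
  have "cond_prob_N \<gamma> n n x = 1"
    using assms(2) unfolding cond_prob_N_def psi_def by simp
  then show ?thesis
    unfolding cond_lik_def prob_N_def cond_lik_recip_def e prod_std_normal_density_shift
    by (simp add: field_simps)
qed

lemma mle_c_eq_minimiser:
  assumes "n \<ge> 1" "0 \<le> Ksum x n"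
    and t_min: "\<And>y. cond_lik_recip (Ksum x n / sqrt n) t \<le> cond_lik_recip (Ksum x n / sqrt n) y"
  shows "mle_c \<gamma> n x = t / sqrt n"
proof -
  define s where "s = Ksum x n / sqrt n"
  define P where "P = (\<Prod>k\<in>{1..n}. std_normal_density (x k))"
  have "sqrt n > 0" using assms(1) by simp
  have "P > 0" unfolding P_def by (intro prod_pos) (simp add: normal_density_pos)
  have cl: "cond_lik \<gamma> n n x \<theta> = P / cond_lik_recip s (sqrt n * \<theta>)" for \<theta>
    unfolding P_def s_def using assms(1,2) by (rule cond_lik_eq_cond_lik_recip)
  have maximiser_iff: "(\<forall>\<theta>'. cond_lik \<gamma> n n x \<theta>' \<le> cond_lik \<gamma> n n x \<theta>)
                         \<longleftrightarrow> (\<forall>y. cond_lik_recip s (sqrt n * \<theta>) \<le> cond_lik_recip s y)" for \<theta>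
  proof -
    have "(\<forall>\<theta>'. cond_lik \<gamma> n n x \<theta>' \<le> cond_lik \<gamma> n n x \<theta>)
            \<longleftrightarrow> (\<forall>\<theta>'. cond_lik_recip s (sqrt n * \<theta>) \<le> cond_lik_recip s (sqrt n * \<theta>'))"
      unfolding cl using \<open>P > 0\<close> cond_lik_recip_pos by (simp add: divide_simps)
    also have "\<dots> \<longleftrightarrow> (\<forall>y. cond_lik_recip s (sqrt n * \<theta>) \<le> cond_lik_recip s y)"
    proof (intro iffI allI)
      fix y
      assume "\<forall>\<theta>'. cond_lik_recip s (sqrt n * \<theta>) \<le> cond_lik_recip s (sqrt n * \<theta>')"
      then show "cond_lik_recip s (sqrt n * \<theta>) \<le> cond_lik_recip s y"
        using \<open>sqrt n > 0\<close> by (metis nonzero_mult_div_cancel_left less_irrefl times_divide_eq_right)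
    qed auto
    finally show ?thesis .
  qed
  show ?thesis
    unfolding mle_c_def Nsize_eq_self[OF assms(2)] maximiser_iff
  proof (rule the_equality)
    show "\<forall>y. cond_lik_recip s (sqrt n * (t / sqrt n)) \<le> cond_lik_recip s y"
      using t_min \<open>sqrt n > 0\<close> by (simp add: s_def)
    show "\<theta> = t / sqrt n" if "\<forall>y. cond_lik_recip s (sqrt n * \<theta>) \<le> cond_lik_recip s y" for \<theta>
    proof -
      have "sqrt n * \<theta> = t"
        using strictly_convex_min_unique[OF strictly_convex_cond_lik_recip[of s]] that t_min
        unfolding s_def by blast
      then show ?thesis using \<open>sqrt n > 0\<close> by (auto simp: field_simps)
    qed
  qed
qed

lemma abs_mle_c_ge:
  assumes "n \<ge> 1" "0 < Ksum x n" "Ksum x n \<le> sqrt n / 16"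
  shows "1 / (4 * Ksum x n) \<le> \<bar>mle_c \<gamma> n x\<bar>"
proof -
  define s where "s = Ksum x n / sqrt n"
  have "sqrt n > 0" using assms(1) by simp
  have s: "0 < s" "s \<le> 1 / 16"
    using assms \<open>sqrt n > 0\<close> unfolding s_def by (auto simp: field_simps)
  have "- (8 / s) < - (1 / s)" "- (1 / s) < - ((1 / 4) / s)"
    using s by (auto simp: field_simps)
  then obtain t where t: "t < - ((1 / 4) / s)" and t_min: "\<And>y. cond_lik_recip s t \<le> cond_lik_recip s y"
    by (rule convex_on_attains_min_between[OF strictly_convex_imp_convex_on[OF strictly_convex_cond_lik_recip]
        _ _ cond_lik_recip_three_points[OF s]]) blast
  have "1 / (4 * Ksum x n) = ((1 / 4) / s) / sqrt n"
    unfolding s_def using \<open>sqrt n > 0\<close> by simp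
  also have "\<dots> \<le> \<bar>t\<bar> / sqrt n"
    using t s by (intro divide_right_mono) auto
  also have "\<dots> = \<bar>mle_c \<gamma> n x\<bar>"
    using mle_c_eq_minimiser[OF assms(1) less_imp_le[OF assms(2)] t_min[unfolded s_def]]
    by (simp add: abs_divide)
  finally show ?thesis .
qed

lemma abs_mle_le:
  assumes "n \<ge> 1"
  shows "\<bar>mle \<gamma> n x\<bar> \<le> \<bar>Ksum x n\<bar> / n + \<bar>Ksum x (2 * n)\<bar> / real (2 * n)"
proof (cases "0 \<le> Ksum x n")
  case True
  then show ?thesis
    unfolding mle_def Nsize_eq_self[OF True] by (simp add: abs_divide)
next
  case False
  then have "Nsize \<gamma> n x = 2 * n"
    using assms by (simp add: Nsize_eq_double)
  then show ?thesis
    unfolding mle_def by (simp add: abs_divide)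
qed

section \<open>Expectations under i.i.d. standard normal sampling\<close>

lemma nn_integral_inverse_Ioc_eq_infinity:
  fixes d :: real
  assumes "0 < d"
  shows "(\<integral>\<^sup>+y\<in>{0<..d}. ennreal (1 / y) \<partial>lborel) = \<infinity>"
proof (rule ccontr)
  assume "(\<integral>\<^sup>+y\<in>{0<..d}. ennreal (1 / y) \<partial>lborel) \<noteq> \<infinity>"
  then obtain r where r: "(\<integral>\<^sup>+y\<in>{0<..d}. ennreal (1 / y) \<partial>lborel) = ennreal r" "0 \<le> r"
    by (cases "\<integral>\<^sup>+y\<in>{0<..d}. ennreal (1 / y) \<partial>lborel") auto
  define e where "e = d * exp (- (r + 1))"
  have e: "0 < e" "e \<le> d"
    unfolding e_def using assms \<open>0 \<le> r\<close> by (auto intro: mult_left_le)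
  have "ennreal (r + 1) = ennreal (ln d - ln e)"
    unfolding e_def using assms by (simp add: ln_mult)
  also have "\<dots> = (\<integral>\<^sup>+y. ennreal (1 / y) * indicator {e..d} y \<partial>lborel)"
    by (rule nn_integral_FTC_Icc[symmetric])
       (use e in \<open>auto intro!: derivative_eq_intros simp: field_simps\<close>)
  also have "\<dots> \<le> (\<integral>\<^sup>+y\<in>{0<..d}. ennreal (1 / y) \<partial>lborel)"
    using e by (intro nn_integral_mono) (auto split: split_indicator)
  finally show False
    using r by (simp add: ennreal_le_iff)
qed

locale iid_std_normal = prob_space M for M :: "'a measure" +
  fixes X :: "nat \<Rightarrow> 'a \<Rightarrow> real"
  assumes indep: "indep_vars (\<lambda>_. borel) X {1..}"
    and std_normal: "\<And>k. k \<ge> 1 \<Longrightarrow> distributed M lborel (X k) std_normal_density"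
begin

lemma distributed_Ksum:
  assumes "n \<ge> 1"
  shows "distributed M lborel (\<lambda>\<omega>. Ksum (\<lambda>k. X k \<omega>) n) (normal_density 0 (sqrt n))"
proof -
  have "distributed M lborel (\<lambda>\<omega>. \<Sum>k\<in>{1..n}. X k \<omega>)
          (normal_density (\<Sum>k\<in>{1..n}. 0) (sqrt (\<Sum>k\<in>{1..n}. 1\<^sup>2)))"
    using assms std_normal by (intro sum_indep_normal indep_vars_subset[OF indep]) auto
  then show ?thesis
    unfolding Ksum_def by simp
qed

lemma Ksum_measurable[measurable]: "n \<ge> 1 \<Longrightarrow> (\<lambda>\<omega>. Ksum (\<lambda>k. X k \<omega>) n) \<in> borel_measurable M"
  using distributed_measurable[OF distributed_Ksum] by simp

lemma nn_integral_Ksum: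
  assumes "n \<ge> 1" and [measurable]: "g \<in> borel_measurable borel"
  shows "(\<integral>\<^sup>+\<omega>. g (Ksum (\<lambda>k. X k \<omega>) n) \<partial>M) = (\<integral>\<^sup>+y. ennreal (normal_density 0 (sqrt n) y) * g y \<partial>lborel)"
  by (rule distributed_nn_integral[OF distributed_Ksum[OF assms(1)], symmetric]) simp

lemma nn_integral_abs_Ksum_div:
  assumes "n \<ge> 1"
  shows "(\<integral>\<^sup>+\<omega>. ennreal (\<bar>Ksum (\<lambda>k. X k \<omega>) n\<bar> / n) \<partial>M) = ennreal (sqrt (2 / pi) / sqrt n)"
proof -
  have "has_bochner_integral lborel (\<lambda>y. normal_density 0 (sqrt n) y * \<bar>y\<bar>) (sqrt n * sqrt (2 / pi))"
    using normal_moment_abs_odd[where \<sigma>="sqrt n" and \<mu>=0 and k=0] assms by simp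
  then have "has_bochner_integral lborel (\<lambda>y. normal_density 0 (sqrt n) y * \<bar>y\<bar> / n) (sqrt n * sqrt (2 / pi) / n)"
    by (rule has_bochner_integral_divide_zero)
  moreover have "sqrt n * sqrt (2 / pi) / n = sqrt (2 / pi) / sqrt n"
    using assms by (simp add: field_simps)
  ultimately have int: "has_bochner_integral lborel (\<lambda>y. normal_density 0 (sqrt n) y * \<bar>y\<bar> / n) (sqrt (2 / pi) / sqrt n)"
    by simp
  have "(\<integral>\<^sup>+\<omega>. ennreal (\<bar>Ksum (\<lambda>k. X k \<omega>) n\<bar> / n) \<partial>M)
          = (\<integral>\<^sup>+y. ennreal (normal_density 0 (sqrt n) y * \<bar>y\<bar> / n) \<partial>lborel)"
    using assms by (subst nn_integral_Ksum) (auto simp: ennreal_mult[symmetric] intro!: nn_integral_cong)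
  also have "\<dots> = ennreal (sqrt (2 / pi) / sqrt n)"
    using int by (subst nn_integral_eq_integral) (auto simp: has_bochner_integral_iff)
  finally show ?thesis .
qed

theorem mle_expectation_tendsto_zero:
  "(\<lambda>n. \<integral>\<^sup>+\<omega>. ennreal \<bar>mle \<gamma> n (\<lambda>k. X k \<omega>)\<bar> \<partial>M) \<longlonglongrightarrow> 0"
proof -
  define B where "B n = ennreal (sqrt (2 / pi) / sqrt n) + ennreal (sqrt (2 / pi) / sqrt (real (2 * n)))"
    for n :: nat
  have bound: "(\<integral>\<^sup>+\<omega>. ennreal \<bar>mle \<gamma> n (\<lambda>k. X k \<omega>)\<bar> \<partial>M) \<le> B n" if "n \<ge> 1" for n
  proof -
    have "(\<integral>\<^sup>+\<omega>. ennreal \<bar>mle \<gamma> n (\<lambda>k. X k \<omega>)\<bar> \<partial>M)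
            \<le> (\<integral>\<^sup>+\<omega>. ennreal (\<bar>Ksum (\<lambda>k. X k \<omega>) n\<bar> / n)
                    + ennreal (\<bar>Ksum (\<lambda>k. X k \<omega>) (2 * n)\<bar> / real (2 * n)) \<partial>M)"
      using abs_mle_le[OF that]
      by (intro nn_integral_mono) (simp add: ennreal_plus[symmetric] ennreal_leI del: ennreal_plus)
    also have "\<dots> = B n"
      using that nn_integral_abs_Ksum_div[of n] nn_integral_abs_Ksum_div[of "2 * n"]
      by (simp add: nn_integral_add B_def del: ennreal_plus)
    finally show ?thesis .
  qed
  have B: "B \<longlonglongrightarrow> 0"
  proof -
    have "(\<lambda>n::nat. sqrt (2 / pi) / sqrt n) \<longlonglongrightarrow> 0" "(\<lambda>n::nat. sqrt (2 / pi) / sqrt (real (2 * n))) \<longlonglongrightarrow> 0"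
      by real_asymp+
    then have "B \<longlonglongrightarrow> ennreal 0 + ennreal 0"
      unfolding B_def by (intro tendsto_add tendsto_ennrealI)
    then show ?thesis by simp
  qed
  show ?thesis
  proof (rule tendsto_sandwich[OF _ _ tendsto_const B])
    show "\<forall>\<^sub>F n in sequentially. (\<integral>\<^sup>+\<omega>. ennreal \<bar>mle \<gamma> n (\<lambda>k. X k \<omega>)\<bar> \<partial>M) \<le> B n"
      using eventually_ge_at_top[of 1] by eventually_elim (rule bound)
  qed simp
qed

theorem mle_c_expectation_infinite:
  assumes "n \<ge> 1"
  shows "(\<integral>\<^sup>+\<omega>. ennreal \<bar>mle_c \<gamma> n (\<lambda>k. X k \<omega>)\<bar> \<partial>M) = \<infinity>"
proof -
  define d where "d = sqrt n / 16"
  define c where "c = normal_density 0 (sqrt n) d / 4"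
  define g where "g y = ennreal (1 / (4 * y)) * indicator {0<..d} y" for y :: real
  have "d > 0" "c > 0"
    unfolding d_def c_def using assms by (simp_all add: normal_density_pos)
  have [measurable]: "g \<in> borel_measurable borel"
    unfolding g_def by measurable
  have density_ge: "c \<le> normal_density 0 (sqrt n) y / 4" if "0 < y" "y \<le> d" for y
  proof -
    have "y\<^sup>2 / (2 * n) \<le> d\<^sup>2 / (2 * n)"
      using that by (intro divide_right_mono power_mono) auto
    then show ?thesis
      unfolding c_def normal_density_def by (simp add: divide_right_mono)
  qed
  have "\<infinity> = ennreal c * (\<integral>\<^sup>+y\<in>{0<..d}. ennreal (1 / y) \<partial>lborel)"
    using \<open>c > 0\<close> \<open>d > 0\<close> by (simp add: nn_integral_inverse_Ioc_eq_infinity ennreal_mult_top)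
  also have "\<dots> = (\<integral>\<^sup>+y\<in>{0<..d}. ennreal (c / y) \<partial>lborel)"
    using \<open>c > 0\<close> by (subst nn_integral_cmult[symmetric])
      (auto simp: ennreal_mult[symmetric] intro!: nn_integral_cong split: split_indicator)
  also have "\<dots> \<le> (\<integral>\<^sup>+y. ennreal (normal_density 0 (sqrt n) y) * g y \<partial>lborel)"
  proof (intro nn_integral_mono)
    fix y :: real
    have "c / y \<le> normal_density 0 (sqrt n) y * (1 / (4 * y))" if "0 < y" "y \<le> d"
      using density_ge[OF that] that by (simp add: field_simps)
    then show "ennreal (c / y) * indicator {0<..d} y \<le> ennreal (normal_density 0 (sqrt n) y) * g y"
      unfolding g_def by (auto simp: ennreal_mult[symmetric] intro!: ennreal_leI split: split_indicator)
  qed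
  also have "\<dots> = (\<integral>\<^sup>+\<omega>. g (Ksum (\<lambda>k. X k \<omega>) n) \<partial>M)"
    using assms by (simp add: nn_integral_Ksum)
  also have "\<dots> \<le> (\<integral>\<^sup>+\<omega>. ennreal \<bar>mle_c \<gamma> n (\<lambda>k. X k \<omega>)\<bar> \<partial>M)"
    using abs_mle_c_ge[OF assms] unfolding g_def d_def
    by (intro nn_integral_mono) (auto intro!: ennreal_leI split: split_indicator)
  finally show ?thesis
    by (simp add: top_unique)
qed

end

theorem mainTheorem1:
  fixes M :: "'a measure" and X :: "nat \<Rightarrow> 'a \<Rightarrow> real" and \<gamma> :: real
  assumes "prob_space M"
    and "prob_space.indep_vars M (\<lambda>_. borel) X {1..}"
    and "\<And>k. k \<ge> 1 \<Longrightarrow> distributed M lborel (X k) std_normal_density"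
    and "\<gamma> \<ge> 0"
  shows "((\<lambda>n. \<integral>\<^sup>+ \<omega>. ennreal \<bar>mle \<gamma> n (\<lambda>k. X k \<omega>)\<bar> \<partial>M) \<longlonglongrightarrow> 0) \<and>
         (\<forall>n::nat. n \<ge> 1 \<longrightarrow> (\<integral>\<^sup>+ \<omega>. ennreal \<bar>mle_c \<gamma> n (\<lambda>k. X k \<omega>)\<bar> \<partial>M) = \<infinity>)"
proof -
  interpret iid_std_normal M X
    using assms(1-3) by (simp add: iid_std_normal_def iid_std_normal_axioms_def)
  show ?thesis
    using mle_expectation_tendsto_zero mle_c_expectation_infinite by blast
qed

end
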